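(* Let $H$ be an abelian group with an alternating $\mathbb{Z}$-bilinear form $\langle-,-\rangle$, and let $z\in\ker\mu$. Then the kernel of the composition \[ Z_2(\mathbb{Q}[H^{(1)}])_{(z)}\longrightarrow C_2(\mathbb{Q}[H])_{(z)}\longrightarrow \hat C_2(\mathbb{Q}[H])_{(z)}, \] where the first map is induced by the inclusion $\mathbb{Q}[H^{(1)}]\hookrightarrow\mathbb{Q}[H]$ and the second is the quotient projection, equals $B_2(\mathbb{Q}[H^{(1)}])_{(z)}$.
   Context: $\mu:H\to\mathrm{Hom}_{\mathbb{Z}}(H,\mathbb{Z})$, $\mu(x)(y)=\langle x,y\rangle$; $H^{(1)}:=H\setminus\ker\mu$. $\mathbb{Q}[S]$ ($S\subset H$) is the $\mathbb{Q}$-vector space with basis symbols $[x]$, $x\in S$; $\mathbb{Q}[H]$ is a Lie algebra via $[[x],[y]]=\langle x,y\rangle[x+y]$ and $\mathbb{Q}[H^{(1)}]$ is a Lie subalgebra. Chevalley–Eilenberg chains: $C_p(\mathfrak g)=\bigwedge^p_{\mathbb{Q}}\mathfrak g$, $\partial(x_1\wedge\cdots\wedge x_p)=\sum_{i<j}(-1)^{i+j}[x_i,x_j]\wedge x_1\wedge\cdots\widehat{x_i}\cdots\widehat{x_j}\cdots\wedge x_p$. For $S\in\{H,H^{(1)}\}$, $p>0$, $w\in H$, $C_p(\mathbb{Q}[S])_{(w)}$ is the span of $[u_1]\wedge\cdots\wedge[u_p]$ with $u_i\in S$, $\sum u_i=w$; this is a subcomplex, with cycles $Z_p(\mathbb{Q}[S])_{(w)}$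 and boundaries $B_p(\mathbb{Q}[S])_{(w)}$ (boundaries of elements of $C_{p+1}(\mathbb{Q}[S])_{(w)}$). $\hat I$ is the ideal of $\bigwedge\mathbb{Q}[H]$ generated by all $[u+v]\wedge[x]-[u]\wedge[x+v]-[v]\wedge[x+u]$, $u,v,x\in H$; $\hat C_2(\mathbb{Q}[H])_{(w)}=C_2(\mathbb{Q}[H])_{(w)}/(\hat I\cap C_2(\mathbb{Q}[H])_{(w)})$. *)

theory Defs
  imports Main "HOL.Rat"
begin

definition alt_bilinear :: "('h::ab_group_add \<Rightarrow> 'h \<Rightarrow> int) \<Rightarrow> bool" where
  "alt_bilinear b \<longleftrightarrow>
     (\<forall>x y z. b (x + y) z = b x z + b y z) \<and>
     (\<forall>x y z. b x (y + z) = b x y + b x z) \<and>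
     (\<forall>x. b x x = 0)"

definition ker_mu :: "('h \<Rightarrow> 'h \<Rightarrow> int) \<Rightarrow> 'h set" where
  "ker_mu b = {x. \<forall>y. b x y = 0}"

definition H1 :: "('h \<Rightarrow> 'h \<Rightarrow> int) \<Rightarrow> 'h set" where
  "H1 b = UNIV - ker_mu b"

text \<open>Second exterior power of Q[H], realised as finitely supported antisymmetric
  functions H x H -> Q; the basis element [x] wedge [y] is wedge2 x y.\<close>
definition wedge2 :: "'h \<Rightarrow> 'h \<Rightarrow> ('h \<Rightarrow> 'h \<Rightarrow> rat)" where
  "wedge2 x y = (\<lambda>p q. (if p = x \<and> q = y then 1 else 0) - (if p = y \<and> q = x then 1 else 0))"

definition qspan :: "('a \<Rightarrow> 'b \<Rightarrow> rat) set \<Rightarrow> ('a \<Rightarrow> 'b \<Rightarrow> rat) set" where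
  "qspan S = {f. \<exists>T c. finite T \<and> T \<subseteq> S \<and> f = (\<lambda>p q. \<Sum>t\<in>T. c t * t p q)}"

text \<open>C_2(Q[S])_(w) (inside C_2(Q[H]); the inclusion map is the identity).\<close>
definition C2 :: "'h::ab_group_add set \<Rightarrow> 'h \<Rightarrow> ('h \<Rightarrow> 'h \<Rightarrow> rat) set" where
  "C2 S w = qspan {wedge2 x y | x y. x \<in> S \<and> y \<in> S \<and> x + y = w}"

text \<open>Chevalley-Eilenberg boundary C_2 -> C_1 (C_1 = finitely supported functions H -> Q).
  For f = (1/2) sum f(x,y) [x] wedge [y] we get
  d f = -(1/2) sum f(x,y) <x,y> [x+y]; in particular d([x] wedge [y]) = -<x,y>[x+y].\<close>
definition bd2 :: "('h::ab_group_add \<Rightarrow> 'h \<Rightarrow> int) \<Rightarrow> ('h \<Rightarrow> 'h \<Rightarrow> rat) \<Rightarrow> ('h \<Rightarrow> rat)" where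
  "bd2 b f = (\<lambda>w. - (1/2) * (\<Sum>(x, y) \<in> {(x, y). f x y \<noteq> 0 \<and> x + y = w}. f x y * of_int (b x y)))"

text \<open>Boundary of the basis element [a] wedge [c] wedge [d] of C_3.\<close>
definition bd3 :: "('h::ab_group_add \<Rightarrow> 'h \<Rightarrow> int) \<Rightarrow> 'h \<Rightarrow> 'h \<Rightarrow> 'h \<Rightarrow> ('h \<Rightarrow> 'h \<Rightarrow> rat)" where
  "bd3 b a c d = (\<lambda>p q.
      - of_int (b a c) * wedge2 (a + c) d p q
      + of_int (b a d) * wedge2 (a + d) c p q
      - of_int (b c d) * wedge2 (c + d) a p q)"

definition Z2 :: "('h::ab_group_add \<Rightarrow> 'h \<Rightarrow> int) \<Rightarrow> 'h \<Rightarrow> ('h \<Rightarrow> 'h \<Rightarrow> rat) set" where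
  "Z2 b w = {f \<in> C2 (H1 b) w. bd2 b f = (\<lambda>_. 0)}"

text \<open>B_2(Q[H^(1)])_(w): image of C_3(Q[H^(1)])_(w), i.e. the span of the boundaries
  of its basis elements.\<close>
definition B2 :: "('h::ab_group_add \<Rightarrow> 'h \<Rightarrow> int) \<Rightarrow> 'h \<Rightarrow> ('h \<Rightarrow> 'h \<Rightarrow> rat) set" where
  "B2 b w = qspan {bd3 b a c d | a c d. a \<in> H1 b \<and> c \<in> H1 b \<and> d \<in> H1 b \<and> a + c + d = w}"

text \<open>Degree-2 part of the ideal I-hat: the span of its (degree-2) generators.\<close>
definition Ihat2 :: "('h::ab_group_add \<Rightarrow> 'h \<Rightarrow> rat) set" where
  "Ihat2 = qspan {(\<lambda>p q. wedge2 (u + v) x p q - wedge2 u (x + v) p q - wedge2 v (x + u) p q)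
                  | u v x. True}"

end

theory Submission
  imports Defs "HOL.Modules" "HOL-Library.Function_Algebras"
begin

(* Write e x = [x] ^ [z - x]. As z lies in the kernel, the weight-z chains are spanned by these
   vectors, e (z - x) = - e x, every weight-z chain is a cycle, and the weight-z generators of
   I-hat are the defects e (u + v) - e u - e v. The boundary of [u] ^ [v] ^ [z - u - v] is
   -<u,v> times this defect, so B2 contains the defects with <u,v> nonzero, and by the cocycle
   identity for defects also all those with u, v, u + v in H^(1).
   For k in ker mu the vector e k is not a chain of Q[H^(1)], but the class of e (v + k) - e v
   modulo B2 does not depend on v in H^(1). Replacing e k by a representative of this class gives
   a map x |-> e' x, equal to e on H^(1) and additive modulo B2. The linear map that kills the
   other weights and sends e x to e' x fixes the chains of Q[H^(1)] of weight z and maps I-hat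
   into B2; hence every weight-z chain of Q[H^(1)] lying in I-hat is a boundary. *)

definition scale2 :: "rat \<Rightarrow> ('a \<Rightarrow> 'b \<Rightarrow> rat) \<Rightarrow> ('a \<Rightarrow> 'b \<Rightarrow> rat)" where
  "scale2 c f = (\<lambda>p q. c * f p q)"

lemma scale2_apply [simp]: "scale2 c f p q = c * f p q"
  by (simp add: scale2_def)

lemma scale2_indicator: "scale2 (if c then 1 else 0) f = (if c then f else 0)"
  by (simp add: fun_eq_iff)

lemma sum_fun_apply2: "(\<Sum>a\<in>A. f a) p q = (\<Sum>a\<in>A. f a p q)"
  by (induction A rule: infinite_finite_induct) simp_all

interpretation bifun: module "scale2 :: rat \<Rightarrow> ('a \<Rightarrow> 'b \<Rightarrow> rat) \<Rightarrow> _"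
  by unfold_locales (simp_all add: fun_eq_iff algebra_simps)

lemma (in module) span_finite_subset:
  assumes "x \<in> span S"
  obtains T where "finite T" "T \<subseteq> S" "x \<in> span T"
proof -
  obtain T r where "finite T" "T \<subseteq> S" "x = (\<Sum>a\<in>T. r a *s a)"
    using assms by (auto simp: span_explicit)
  then show thesis
    using that span_sum[of T "\<lambda>a. r a *s a" T] by (simp add: span_base span_scale)
qed

lemma qspan_eq_span: "qspan S = bifun.span S"
  unfolding qspan_def bifun.span_explicit by (auto simp: fun_eq_iff sum_fun_apply2)

lemma wedge2_swap: "wedge2 y x = - wedge2 x y"
  by (auto simp: wedge2_def fun_eq_iff)

lemma wedge2_support: "wedge2 x y p q \<noteq> 0 \<Longrightarrow> (p = x \<and> q = y) \<or> (p = y \<and> q = x)"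
  by (auto simp: wedge2_def split: if_splits)

lemma C2_support:
  assumes "f \<in> C2 A w" "f p q \<noteq> 0"
  shows "p \<in> A" "q \<in> A" "p + q = w"
proof -
  have "f \<in> bifun.span {wedge2 x y | x y. x \<in> A \<and> y \<in> A \<and> x + y = w}"
    using assms(1) by (simp add: C2_def qspan_eq_span)
  then have "f p q \<noteq> 0 \<longrightarrow> p \<in> A \<and> q \<in> A \<and> p + q = w"
    by (induction rule: bifun.span_induct_alt) (auto dest!: wedge2_support simp: add.commute)
  with assms(2) show "p \<in> A" "q \<in> A" "p + q = w" by auto
qed

lemma wedge2_weight: "wedge2 x y p q \<noteq> 0 \<Longrightarrow> p + q = x + (y::'a::ab_semigroup_add)"
  using wedge2_support[of x y p q] add.commute[of y x] by auto

definition ihat_gen :: "'h::ab_group_add \<Rightarrow> 'h \<Rightarrow> 'h \<Rightarrow> ('h \<Rightarrow> 'h \<Rightarrow> rat)" where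
  "ihat_gen u v x = wedge2 (u + v) x - wedge2 u (x + v) - wedge2 v (x + u)"

lemma Ihat2_eq_span: "Ihat2 = bifun.span (range (\<lambda>(u, v, x). ihat_gen u v x))"
proof -
  have "{(\<lambda>p q. wedge2 (u + v) x p q - wedge2 u (x + v) p q - wedge2 v (x + u) p q) | u v x. True}
      = range (\<lambda>(u, v, x). ihat_gen u v x)"
    by (auto simp: ihat_gen_def fun_diff_def image_def split_paired_Ex)
  then show ?thesis unfolding Ihat2_def qspan_eq_span by (rule arg_cong)
qed

lemma ihat_gen_weight: "ihat_gen u v x p q \<noteq> 0 \<Longrightarrow> p + q = u + v + x"
proof -
  assume "ihat_gen u v x p q \<noteq> 0"
  then have "wedge2 (u + v) x p q \<noteq> 0 \<or> wedge2 u (x + v) p q \<noteq> 0 \<or> wedge2 v (x + u) p q \<noteq> 0"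
    by (auto simp: ihat_gen_def)
  then show ?thesis by (auto dest!: wedge2_weight simp: algebra_simps)
qed

lemma C2_mono: "A \<subseteq> A' \<Longrightarrow> C2 A w \<subseteq> C2 A' w"
  unfolding C2_def qspan_eq_span by (rule bifun.span_mono) blast

locale alt_form =
  fixes b :: "'h::ab_group_add \<Rightarrow> 'h \<Rightarrow> int"
  assumes alt_bilinear: "alt_bilinear b"
begin

lemma add_left [simp]: "b (x + y) w = b x w + b y w"
  and add_right [simp]: "b w (x + y) = b w x + b w y"
  and self [simp]: "b x x = 0"
  using alt_bilinear unfolding alt_bilinear_def by blast+

lemma zero_left [simp]: "b 0 w = 0"
  using add_left[of 0 0 w] by simp

lemma zero_right [simp]: "b w 0 = 0"
  using add_right[of w 0 0] by simp

lemma minus_left [simp]: "b (- x) w = - b x w"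
  using add_left[of x "- x" w] by simp

lemma minus_right [simp]: "b w (- x) = - b w x"
  using add_right[of w x "- x"] by simp

lemma diff_left [simp]: "b (x - y) w = b x w - b y w"
  by (simp only: diff_conv_add_uminus add_left minus_left)

lemma diff_right [simp]: "b w (x - y) = b w x - b w y"
  by (simp only: diff_conv_add_uminus add_right minus_right)

lemma skew: "b y x = - b x y"
proof -
  have "0 = b (x + y) (x + y)" by (simp only: self)
  also have "\<dots> = b x y + b y x" 
    by (simp only: add_left add_right) (simp only: self add_0_left add_0_right)
  finally show ?thesis by linarith
qed

lemma sum_right: "b x (\<Sum>a\<in>A. g a) = (\<Sum>a\<in>A. b x (g a))"
  by (induction A rule: infinite_finite_induct) simp_all

lemma ker_mu_left: "k \<in> ker_mu b \<Longrightarrow> b k y = 0"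
  by (simp add: ker_mu_def)

lemma ker_mu_right: "k \<in> ker_mu b \<Longrightarrow> b y k = 0"
  using skew[of y k] ker_mu_left[of k y] by simp

lemma H1_iff: "x \<in> H1 b \<longleftrightarrow> (\<exists>y. b x y \<noteq> 0)"
  by (simp add: H1_def ker_mu_def)

lemma H1_iff': "x \<in> H1 b \<longleftrightarrow> (\<exists>y. b y x \<noteq> 0)"
  by (metis H1_iff skew neg_equal_0_iff_equal)

lemma ker_mu_add: "k \<in> ker_mu b \<Longrightarrow> l \<in> ker_mu b \<Longrightarrow> k + l \<in> ker_mu b"
  and ker_mu_diff: "k \<in> ker_mu b \<Longrightarrow> l \<in> ker_mu b \<Longrightarrow> k - l \<in> ker_mu b"
  by (simp_all add: ker_mu_def)

lemma H1_add_ker_mu: "x \<in> H1 b \<Longrightarrow> k \<in> ker_mu b \<Longrightarrow> x + k \<in> H1 b"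
  and H1_ker_mu_diff: "x \<in> H1 b \<Longrightarrow> k \<in> ker_mu b \<Longrightarrow> k - x \<in> H1 b"
  and H1_uminus: "x \<in> H1 b \<Longrightarrow> - x \<in> H1 b"
  by (auto simp: H1_iff ker_mu_left)

text \<open>Induction step: given a common witness w for X and a witness y for the new element,
  one of w + n y with 0 \<le> n \<le> card X + 1 works, since each element rules out at most one n.\<close>

lemma common_witness:
  assumes "finite X" "X \<subseteq> H1 b"
  shows "\<exists>w. \<forall>x\<in>X. b x w \<noteq> 0"
  using assms
proof (induction X rule: finite_induct)
  case empty
  then show ?case by simp
next
  case (insert x0 X)
  then obtain w where w: "\<forall>x\<in>X. b x w \<noteq> 0" by blast
  obtain y where y: "b x0 y \<noteq> 0" using insert.prems by (auto simp: H1_iff)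
  have "\<exists>m. \<forall>n. b x w + int n * b x y = 0 \<longrightarrow> n = m" if "x \<in> insert x0 X" for x
  proof (cases "b x y = 0")
    case True
    then show ?thesis using w y that by auto
  next
    case False
    then show ?thesis by (metis add_left_cancel mult_cancel_right of_nat_eq_iff)
  qed
  then obtain m where m: "\<And>x n. x \<in> insert x0 X \<Longrightarrow> b x w + int n * b x y = 0 \<Longrightarrow> n = m x"
    by metis
  have "card (m ` insert x0 X) < card {0..card X + 1}"
    using card_image_le[of "insert x0 X" m] insert.hyps by simp
  then have "\<not> {0..card X + 1} \<subseteq> m ` insert x0 X"
    by (meson card_mono finite_imageI finite.insertI insert.hyps(1) leD)
  then obtain n where n: "n \<notin> m ` insert x0 X" by blast
  define w' where "w' = w + (\<Sum>_<n. y)"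
  have "b x w' = b x w + int n * b x y" for x
    by (simp add: w'_def sum_right)
  then show ?case
    using n m by (metis image_eqI insert_iff)
qed

end

locale alt_form_weight = alt_form +
  fixes z :: "'h::ab_group_add"
  assumes z_ker_mu: "z \<in> ker_mu b"
begin

lemma z_left [simp]: "b z y = 0"
  and z_right [simp]: "b y z = 0"
  using ker_mu_left ker_mu_right z_ker_mu by blast+

lemma subspace_B2: "bifun.subspace (B2 b z)"
  unfolding B2_def qspan_eq_span by (rule bifun.subspace_span)

lemmas B2_zero = bifun.subspace_0[OF subspace_B2]
  and B2_add = bifun.subspace_add[OF subspace_B2]
  and B2_diff = bifun.subspace_diff[OF subspace_B2]
  and B2_uminus = bifun.subspace_neg[OF subspace_B2]
  and B2_scale = bifun.subspace_scale[OF subspace_B2]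

lemma bd2_weight_z:
  assumes "f \<in> C2 UNIV z"
  shows "bd2 b f = (\<lambda>_. 0)"
proof -
  have "b x y = 0" if "f x y \<noteq> 0" for x y
  proof -
    have "y = z - x" using C2_support(3)[OF assms that] by (simp add: algebra_simps)
    then show ?thesis by simp
  qed
  then show ?thesis unfolding bd2_def by (auto simp: fun_eq_iff intro!: sum.neutral)
qed

lemma Z2_eq_C2: "Z2 b z = C2 (H1 b) z"
  using bd2_weight_z C2_mono[of "H1 b" UNIV z] by (auto simp: Z2_def)

definition ez :: "'h \<Rightarrow> 'h \<Rightarrow> 'h \<Rightarrow> rat" where
  "ez x = wedge2 x (z - x)"

lemma ez_swap: "ez (z - x) = - ez x"
  by (simp add: ez_def wedge2_swap[of "z - x"])

lemma ez_in_C2_H1: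
  assumes "x \<in> H1 b"
  shows "ez x \<in> C2 (H1 b) z"
proof -
  have "x + (z - x) = z" by simp
  then show ?thesis
    unfolding ez_def C2_def qspan_eq_span
    using assms H1_ker_mu_diff[OF assms z_ker_mu] by (blast intro: bifun.span_base)
qed

definition ez_defect :: "'h \<Rightarrow> 'h \<Rightarrow> 'h \<Rightarrow> 'h \<Rightarrow> rat" where
  "ez_defect u v = ez (u + v) - ez u - ez v"

lemma ihat_gen_weight_z: "ihat_gen u v (z - u - v) = ez_defect u v"
  unfolding ihat_gen_def ez_defect_def ez_def
  using wedge2_swap[of "z - u" u] wedge2_swap[of "z - v" v] by (simp add: algebra_simps)

lemma bd3_weight_z: "bd3 b u v (z - u - v) = scale2 (- of_int (b u v)) (ez_defect u v)"
proof -
  have "b u (z - u - v) = - b u v" "b v (z - u - v) = b u v"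
    using skew[of v u] by simp_all
  moreover have "u + (z - u - v) = z - v" "v + (z - u - v) = z - u" "z - u - v = z - (u + v)"
    by (simp_all add: algebra_simps)
  ultimately show ?thesis
    unfolding bd3_def ez_defect_def ez_def
    by (simp add: fun_eq_iff wedge2_swap[of "z - u" u] wedge2_swap[of "z - v" v] algebra_simps)
qed

lemma bd3_mem_C2_Ihat2:
  assumes "a \<in> H1 b" "c \<in> H1 b" "d \<in> H1 b" "a + c + d = z"
  shows "bd3 b a c d \<in> C2 (H1 b) z \<inter> Ihat2"
proof -
  have d: "d = z - a - c" using assms(4) by (simp add: algebra_simps)
  have "a + c = z - d" using assms(4) by (simp add: algebra_simps)
  then have "a + c \<in> H1 b" using H1_ker_mu_diff[OF assms(3) z_ker_mu] by simp
  then have "ez_defect a c \<in> C2 (H1 b) z"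
    using ez_in_C2_H1 assms(1,2) unfolding ez_defect_def C2_def qspan_eq_span
    by (simp add: bifun.span_diff)
  moreover have "ez_defect a c \<in> Ihat2"
    unfolding Ihat2_eq_span ihat_gen_weight_z[symmetric]
    by (rule bifun.span_base, rule image_eqI[of _ _ "(a, c, z - a - c)"]) simp_all
  ultimately show ?thesis
    unfolding d bd3_weight_z C2_def Ihat2_def qspan_eq_span
    by (simp add: bifun.span_scale bifun.span_neg)
qed

lemma B2_subset_C2_Ihat2: "B2 b z \<subseteq> C2 (H1 b) z \<inter> Ihat2"
  unfolding B2_def qspan_eq_span
proof (rule bifun.span_minimal)
  show "bifun.subspace (C2 (H1 b) z \<inter> Ihat2)"
    unfolding C2_def Ihat2_def qspan_eq_span by (simp add: bifun.subspace_inter)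
qed (auto dest: bd3_mem_C2_Ihat2)

lemma ez_defect_in_B2:
  assumes "b u v \<noteq> 0"
  shows "ez_defect u v \<in> B2 b z"
proof -
  have "b (z - u - v) v \<noteq> 0" using assms by simp
  then have "u \<in> H1 b" "v \<in> H1 b" "z - u - v \<in> H1 b"
    using assms H1_iff H1_iff' by blast+
  then have "bd3 b u v (z - u - v) \<in> B2 b z"
    unfolding B2_def qspan_eq_span by (intro bifun.span_base) force
  then have "scale2 (- 1 / of_int (b u v)) (bd3 b u v (z - u - v)) \<in> B2 b z"
    by (rule B2_scale)
  then show ?thesis
    using assms by (simp add: bd3_weight_z fun_eq_iff)
qed

lemma ez_defect_cocycle: "ez_defect u v + ez_defect (u + v) w = ez_defect v w + ez_defect u (v + w)"
  by (simp add: ez_defect_def algebra_simps)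

lemma ez_defect_in_B2_H1:
  assumes "u \<in> H1 b" "v \<in> H1 b" "u + v \<in> H1 b"
  shows "ez_defect u v \<in> B2 b z"
proof (cases "b u v = 0")
  case True
  obtain w where w: "b u w \<noteq> 0" "b v w \<noteq> 0" "b (u + v) w \<noteq> 0"
    using common_witness[of "{u, v, u + v}"] assms by auto
  have "ez_defect u v = ez_defect v w + ez_defect u (v + w) - ez_defect (u + v) w"
    using ez_defect_cocycle[of u v w] by (simp add: algebra_simps)
  moreover have "b u (v + w) \<noteq> 0" using True w by simp
  ultimately show ?thesis
    using w by (simp add: B2_add B2_diff ez_defect_in_B2)
qed (rule ez_defect_in_B2)

lemma ez_add_ez_uminus:
  assumes "y \<in> H1 b"
  shows "ez y + ez (- y) \<in> B2 b z"
proof -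
  obtain v where v: "b v y \<noteq> 0" using assms by (auto simp: H1_iff')
  have "ez y + ez (- y) = - (ez_defect v y + ez_defect (v + y) (- y))"
    by (simp add: ez_defect_def algebra_simps)
  moreover have "b (v + y) (- y) \<noteq> 0" using v by simp
  ultimately show ?thesis
    using v by (metis B2_add B2_uminus ez_defect_in_B2)
qed

definition shift_rep :: "'h \<Rightarrow> 'h \<Rightarrow> 'h \<Rightarrow> 'h \<Rightarrow> rat" where
  "shift_rep y k = ez y + ez (k - y)"

lemma ez_shift_rep:
  assumes "k \<in> ker_mu b" "b v y \<noteq> 0"
  shows "ez (v + k) - ez v - shift_rep y k \<in> B2 b z"
proof -
  have "ez (v + k) - ez v - shift_rep y k = ez_defect (v + y) (k - y) + ez_defect v y"
    by (simp add: ez_defect_def shift_rep_def algebra_simps)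
  moreover have "b (v + y) (k - y) \<noteq> 0"
    using assms skew[of v y] by (simp add: ker_mu_left ker_mu_right)
  ultimately show ?thesis
    using assms(2) by (simp add: B2_add ez_defect_in_B2)
qed

lemma shift_rep_indep:
  assumes "k \<in> ker_mu b" "y \<in> H1 b" "y' \<in> H1 b"
  shows "shift_rep y k - shift_rep y' k \<in> B2 b z"
proof -
  obtain w where "b y w \<noteq> 0" "b y' w \<noteq> 0"
    using common_witness[of "{y, y'}"] assms(2,3) by auto
  then have "b w y \<noteq> 0" "b w y' \<noteq> 0" using skew[of w] by auto
  moreover have "shift_rep y k - shift_rep y' k
      = (ez (w + k) - ez w - shift_rep y' k) - (ez (w + k) - ez w - shift_rep y k)"
    by simp
  ultimately show ?thesis
    using assms(1) by (metis B2_diff ez_shift_rep)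
qed

text \<open>For k in the kernel, shift k represents the class of ez (v + k) - ez v modulo B2 b z,
  which does not depend on v \<in> H1 b.\<close>

definition shift :: "'h \<Rightarrow> 'h \<Rightarrow> 'h \<Rightarrow> rat" where
  "shift k = shift_rep (SOME y. y \<in> H1 b) k"

definition shift_odd :: "'h \<Rightarrow> 'h \<Rightarrow> 'h \<Rightarrow> rat" where
  "shift_odd k = scale2 (1 / 2) (shift k - shift (z - k))"

lemma shift_odd_swap: "shift_odd (z - k) = - shift_odd k"
  by (simp add: shift_odd_def fun_eq_iff algebra_simps)

definition ker_correction :: "'h \<Rightarrow> 'h \<Rightarrow> 'h \<Rightarrow> rat" where
  "ker_correction k = shift_odd k - ez k"

lemma ker_correction_swap: "ker_correction (z - k) = - ker_correction k"
  by (simp add: ker_correction_def shift_odd_swap ez_swap)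

text \<open>On weight z this replaces ez k by shift_odd k for k in the kernel; shift_odd is odd under
  k \<mapsto> z - k like ez, so this is compatible with ez (z - k) = - ez k. The finite set F keeps
  the sum finite; the factor 1/2 compensates for k and z - k both occurring.\<close>

definition retract :: "'h set \<Rightarrow> ('h \<Rightarrow> 'h \<Rightarrow> rat) \<Rightarrow> ('h \<Rightarrow> 'h \<Rightarrow> rat)" where
  "retract F f = (\<lambda>p q. if p + q = z then f p q else 0)
     + scale2 (1 / 2) (\<Sum>k\<in>F \<inter> ker_mu b. scale2 (f k (z - k)) (ker_correction k))"

lemma module_hom_retract: "module_hom scale2 scale2 (retract F)"
  unfolding module_hom_iff
  by (simp add: bifun.module_axioms retract_def fun_eq_iff sum_fun_apply2 sum.distrib
      sum_distrib_left algebra_simps)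

lemma retract_C2_H1:
  assumes "f \<in> C2 (H1 b) z"
  shows "retract F f = f"
proof -
  have "f k (z - k) = 0" if "k \<in> ker_mu b" for k
    using C2_support(1)[OF assms] that by (auto simp: H1_def)
  moreover have "f p q = 0" if "p + q \<noteq> z" for p q
    using C2_support(3)[OF assms] that by blast
  ultimately show ?thesis by (auto simp: retract_def fun_eq_iff)
qed

lemma retract_other_weight:
  assumes "\<And>p q. f p q \<noteq> 0 \<Longrightarrow> p + q = w" "w \<noteq> z"
  shows "retract F f = 0"
proof -
  have "f p q = 0" if "p + q = z" for p q
    using assms that by blast
  then show ?thesis by (simp add: retract_def fun_eq_iff)
qed

lemma ez_diag: "ez y k (z - k) = (if k = y then 1 else 0) - (if k = z - y then 1 else 0)"
  by (auto simp: ez_def wedge2_def)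

context
  assumes H1_nonempty: "H1 b \<noteq> {}"
begin

lemma shift_shift_rep:
  assumes "k \<in> ker_mu b" "y \<in> H1 b"
  shows "shift k - shift_rep y k \<in> B2 b z"
  unfolding shift_def
  using shift_rep_indep[OF assms(1) _ assms(2)] H1_nonempty by (simp add: some_in_eq)

lemma ez_shift:
  assumes "v \<in> H1 b" "k \<in> ker_mu b"
  shows "ez (v + k) - ez v - shift k \<in> B2 b z"
proof -
  obtain y where y: "b v y \<noteq> 0" using assms(1) H1_iff by blast
  then have "y \<in> H1 b" using H1_iff' by blast
  moreover have "ez (v + k) - ez v - shift k
      = (ez (v + k) - ez v - shift_rep y k) - (shift k - shift_rep y k)"
    by simp
  ultimately show ?thesis
    using assms y by (metis B2_diff ez_shift_rep shift_shift_rep)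
qed

lemma shift_add:
  assumes "k \<in> ker_mu b" "l \<in> ker_mu b"
  shows "shift (k + l) - shift k - shift l \<in> B2 b z"
proof -
  obtain v where v: "v \<in> H1 b" using H1_nonempty by blast
  have "shift (k + l) - shift k - shift l
      = (ez ((v + k) + l) - ez (v + k) - shift l) + (ez (v + k) - ez v - shift k)
        - (ez (v + (k + l)) - ez v - shift (k + l))"
    by (simp add: algebra_simps)
  then show ?thesis
    using assms v H1_add_ker_mu ker_mu_add by (simp only: B2_add B2_diff ez_shift)
qed

lemma shift_z: "shift z \<in> B2 b z"
proof -
  obtain v where v: "v \<in> H1 b" using H1_nonempty by blast
  have "shift z = - (ez (v + z) - ez v - shift z) - (ez (- v) + ez v)"
    using ez_swap[of "- v"] by (simp add: algebra_simps)
  then show ?thesis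
    using ez_add_ez_uminus[OF H1_uminus[OF v]] ez_shift[OF v z_ker_mu]
    by (metis B2_diff B2_uminus minus_minus)
qed

lemma shift_odd_shift:
  assumes "k \<in> ker_mu b"
  shows "shift_odd k - shift k \<in> B2 b z"
proof -
  have "shift k + shift (z - k) = shift z - (shift (k + (z - k)) - shift k - shift (z - k))"
    by simp
  then have "shift k + shift (z - k) \<in> B2 b z"
    using shift_z shift_add[OF assms ker_mu_diff[OF z_ker_mu assms]] by (simp only: B2_diff)
  moreover have "shift_odd k - shift k = - scale2 (1 / 2) (shift k + shift (z - k))"
    by (simp add: shift_odd_def fun_eq_iff algebra_simps)
  ultimately show ?thesis by (simp only: B2_uminus B2_scale)
qed

definition ez_H1 :: "'h \<Rightarrow> 'h \<Rightarrow> 'h \<Rightarrow> rat" where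
  "ez_H1 x = (if x \<in> ker_mu b then shift_odd x else ez x)"

lemma ez_H1_add_ker:
  assumes "v \<in> H1 b" "k \<in> ker_mu b"
  shows "ez_H1 (v + k) - ez_H1 v - ez_H1 k \<in> B2 b z"
proof -
  have "v \<notin> ker_mu b" "v + k \<notin> ker_mu b"
    using assms H1_add_ker_mu by (auto simp: H1_def)
  then have "ez_H1 (v + k) - ez_H1 v - ez_H1 k
      = (ez (v + k) - ez v - shift k) - (shift_odd k - shift k)"
    using assms(2) by (simp add: ez_H1_def)
  then show ?thesis
    using assms by (metis B2_diff ez_shift shift_odd_shift)
qed

lemma ez_H1_add: "ez_H1 (u + v) - ez_H1 u - ez_H1 v \<in> B2 b z"
proof -
  consider "u \<in> ker_mu b" "v \<in> ker_mu b" | "u \<in> H1 b" "v \<in> ker_mu b" | "u \<in> ker_mu b" "v \<in> H1 b"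
    | "u \<in> H1 b" "v \<in> H1 b" "u + v \<in> ker_mu b" | "u \<in> H1 b" "v \<in> H1 b" "u + v \<in> H1 b"
    by (auto simp: H1_def)
  then show ?thesis
  proof cases
    case 1
    then have "ez_H1 (u + v) - ez_H1 u - ez_H1 v
        = (shift_odd (u + v) - shift (u + v)) - (shift_odd u - shift u) - (shift_odd v - shift v)
          + (shift (u + v) - shift u - shift v)"
      using ker_mu_add by (simp add: ez_H1_def algebra_simps)
    then show ?thesis
      using 1 ker_mu_add by (metis B2_add B2_diff shift_odd_shift shift_add)
  next
    case 2
    then show ?thesis by (rule ez_H1_add_ker)
  next
    case 3
    then show ?thesis
      using ez_H1_add_ker[of v u] by (simp add: algebra_simps)
  next
    case 4
    then have "u \<notin> ker_mu b" "v \<notin> ker_mu b" by (auto simp: H1_def)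
    moreover have "shift_rep u (u + v) = ez u + ez v" by (simp add: shift_rep_def)
    ultimately have "ez_H1 (u + v) - ez_H1 u - ez_H1 v
        = (shift_odd (u + v) - shift (u + v)) + (shift (u + v) - shift_rep u (u + v))"
      using 4 by (simp add: ez_H1_def)
    then show ?thesis
      using 4 by (metis B2_add shift_odd_shift shift_shift_rep)
  next
    case 5
    then have "ez_H1 (u + v) - ez_H1 u - ez_H1 v = ez_defect u v"
      by (auto simp: ez_H1_def ez_defect_def H1_def)
    then show ?thesis
      using 5 by (simp add: ez_defect_in_B2_H1)
  qed
qed

lemma retract_ez:
  assumes "finite F" "y \<in> F" "z - y \<in> F"
  shows "retract F (ez y) = ez_H1 y"
proof -
  have weight: "(\<lambda>p q. if p + q = z then ez y p q else 0) = ez y"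
    using wedge2_weight[of y "z - y"] by (force simp: fun_eq_iff ez_def)
  have "(\<Sum>k\<in>F \<inter> ker_mu b. scale2 (ez y k (z - k)) (ker_correction k))
      = (\<Sum>k\<in>F \<inter> ker_mu b. if k = y then ker_correction k else 0)
        - (\<Sum>k\<in>F \<inter> ker_mu b. if k = z - y then ker_correction k else 0)"
    by (simp add: ez_diag bifun.scale_left_diff_distrib sum_subtractf scale2_indicator)
  also have "\<dots> = (if y \<in> ker_mu b then scale2 2 (ker_correction y) else 0)"
    using assms ker_mu_diff[OF z_ker_mu, of y] ker_mu_diff[OF z_ker_mu, of "z - y"]
    by (auto simp: ker_correction_swap fun_eq_iff)
  finally show ?thesis
    unfolding retract_def weight by (auto simp: ez_H1_def ker_correction_def fun_eq_iff field_simps)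
qed

lemma retract_ihat_gen:
  assumes "finite F" "{u, v, u + v, z - u, z - v, z - (u + v)} \<subseteq> F"
  shows "retract F (ihat_gen u v x) \<in> B2 b z"
proof (cases "u + v + x = z")
  case True
  then have "x = z - u - v" by (simp add: algebra_simps)
  then have "ihat_gen u v x = ez_defect u v" by (simp add: ihat_gen_weight_z)
  then have "retract F (ihat_gen u v x) = ez_H1 (u + v) - ez_H1 u - ez_H1 v"
    using assms by (simp add: ez_defect_def module_hom.diff[OF module_hom_retract] retract_ez)
  then show ?thesis by (simp add: ez_H1_add)
next
  case False
  then show ?thesis
    using retract_other_weight[OF ihat_gen_weight False] B2_zero by simp
qed

end

lemma C2_H1_Ihat2_subset_B2: "C2 (H1 b) z \<inter> Ihat2 \<subseteq> B2 b z"
proof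
  fix f assume f: "f \<in> C2 (H1 b) z \<inter> Ihat2"
  show "f \<in> B2 b z"
  proof (cases "H1 b = {}")
    case True
    then have "f = 0" using f C2_support(1)[of f "H1 b" z] by (auto simp: fun_eq_iff)
    then show ?thesis by (simp add: B2_zero)
  next
    case False
    let ?gen = "\<lambda>(u, v, x). ihat_gen u v x"
    obtain T0 where "finite T0" "T0 \<subseteq> range ?gen" "f \<in> bifun.span T0"
      using f unfolding Ihat2_eq_span by (blast elim: bifun.span_finite_subset)
    then obtain T where "finite T" "f \<in> bifun.span (?gen ` T)"
      using finite_subset_image[of T0 ?gen UNIV] by blast
    define F where "F = (\<Union>(u, v, x)\<in>T. {u, v, u + v, z - u, z - v, z - (u + v)})"
    have "finite F" using \<open>finite T\<close> by (auto simp: F_def)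
    have gens: "retract F (ihat_gen u v x) \<in> B2 b z" if "(u, v, x) \<in> T" for u v x
      using that by (intro retract_ihat_gen[OF False \<open>finite F\<close>]) (auto simp: F_def)
    have "f = retract F f" using f retract_C2_H1 by simp
    also have "\<dots> \<in> retract F ` bifun.span (?gen ` T)"
      using \<open>f \<in> bifun.span (?gen ` T)\<close> by blast
    also have "\<dots> = bifun.span (retract F ` ?gen ` T)"
      by (rule module_hom.span_image[OF module_hom_retract, symmetric])
    also have "\<dots> \<subseteq> B2 b z"
      using gens by (intro bifun.span_minimal subspace_B2) auto
    finally show ?thesis .
  qed
qed

end

theorem proposition3p3:
  fixes b :: "'h::ab_group_add \<Rightarrow> 'h \<Rightarrow> int" and z :: 'h
  assumes "alt_bilinear b"
    and "z \<in> ker_mu b"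
  shows "{f \<in> Z2 b z. f \<in> Ihat2 \<inter> C2 UNIV z} = B2 b z"
proof -
  interpret alt_form_weight b z
    using assms by unfold_locales
  have "C2 (H1 b) z \<subseteq> C2 UNIV z" by (rule C2_mono) simp
  then show ?thesis
    using C2_H1_Ihat2_subset_B2 B2_subset_C2_Ihat2 unfolding Z2_eq_C2 by blast
qed

end
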